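(* Let $F\in\mathbb{R}^{n\times n}$, $L\in\mathbb{R}^{n\times m}$, and let $\Sigma\in\mathbb{R}^{m\times m}$ be symmetric positive definite with symmetric square root $\Sigma^{1/2}$. Let $\alpha>0$ and $\bar v>0$, and set $\bar\omega=\alpha+\bar v$. Suppose there exist a symmetric positive definite matrix $\mathcal{P}\in\mathbb{R}^{n\times n}$ and a scalar $b\in(0,1)$ such that $$\begin{bmatrix} b\mathcal{P} & F^T \mathcal{P} & 0 & 0 & 0 & 0\\ \mathcal{P} F & \mathcal{P} & \mathcal{P} & -\mathcal{P} L \Sigma^{1/2} & 0 & 0\\ 0 & \mathcal{P} & \tfrac{1-b}{\bar{\omega}}I & 0 & 0 & 0\\ 0 & -\Sigma^{1/2}L^T \mathcal{P} & 0 & \tfrac{1-b}{\bar{\omega}}I & 0 & 0\\ 0 & 0 & 0 & 0 & I & 0\\ 0 & 0 & 0 & 0 & 0 & I \end{bmatrix}\succeq 0 .$$ Then every trajectory of $$e_{k+1}=Fe_k-L\Sigma^{1/2}\zeta_k+v_k,\qquad e_1=0,\quad k\in\mathbb{N},$$ driven by arbitrary sequences $\zeta_k\in\mathbb{R}^m$, $v_k\in\mathbb{R}^n$ with $\|\zeta_k\|^2\le\alpha$ and $\|v_k\|^2\le\bar v$ for all $k$, satisfies $e_k^T\mathcal{P}e_k\le 1$ for all $k\in\mathbb{N}$. In other words, the set $\mathcal{R}$ of all such reachable $e_k$ is contained in the ellipsoid $\{e\in\mathbb{R}^n : e^T\mathcal{P}e\le 1\}$.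
   Context: Setting: an estimation-error system $e_{k+1}=(F-LC)e_k-L\eta_k-L\delta_k+v_k$ with residual $r_k=Ce_k+\eta_k+\delta_k$, where $\eta_k$ is sensor noise, $v_k$ process noise and $\delta_k$ an additive sensor attack. It is rewritten in terms of the normalized residual $\zeta_k:=\Sigma^{-1/2}(Ce_k+\eta_k+\delta_k)$ as $e_{k+1}=Fe_k-L\Sigma^{1/2}\zeta_k+v_k$. A chi-squared detector with threshold $\alpha$ raises an alarm when $\|\zeta_k\|^2>\alpha$. In the paper, $\bar v$ is chosen so that $\Pr[\|v_k\|^2\le\bar v]=1-\mathcal{A}$, with $\mathcal{A}$ the false alarm rate. The set $\mathcal{R}$ (called the $(1-\mathcal{A})$-probable hidden reachable set) is then the set of states reachable from $e_1=0$ when $\|\zeta_k\|^2\le\alpha$ and $\|v_k\|^2\le\bar v$. The matrix inequality $\succeq 0$ means positive semidefinite. *)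

theory Defs
  imports "HOL-Analysis.Analysis"
begin

definition psd :: "real^'n^'n \<Rightarrow> bool" where
  "psd M \<longleftrightarrow> transpose M = M \<and> (\<forall>x. 0 \<le> x \<bullet> (M *v x))"

definition posdef :: "real^'n^'n \<Rightarrow> bool" where
  "posdef M \<longleftrightarrow> transpose M = M \<and> (\<forall>x. x \<noteq> 0 \<longrightarrow> 0 < x \<bullet> (M *v x))"

text \<open>The 6x6 block matrix of the LMI. Block index sets: 'n, 'n, 'n, 'm, 'p, 'q
(the last two identity blocks have unspecified size).
Arguments: F, L, Sh (= Sigma^(1/2)), P, b, w (= omega bar).\<close>
definition lmi_mat ::
  "real^'n::finite^'n \<Rightarrow> real^'m::finite^'n \<Rightarrow> real^'m^'m \<Rightarrow> real^'n^'n \<Rightarrow> real \<Rightarrow> real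
   \<Rightarrow> real^('n + 'n + 'n + 'm + 'p::finite + 'q::finite)^('n + 'n + 'n + 'm + 'p + 'q)" where
  "lmi_mat F L Sh P b w = (\<chi> i j.
     (case i of
        Inl a \<Rightarrow> (case j of
            Inl c \<Rightarrow> b * P $ a $ c
          | Inr (Inl c) \<Rightarrow> (transpose F ** P) $ a $ c
          | _ \<Rightarrow> 0)
      | Inr (Inl a) \<Rightarrow> (case j of
            Inl c \<Rightarrow> (P ** F) $ a $ c
          | Inr (Inl c) \<Rightarrow> P $ a $ c
          | Inr (Inr (Inl c)) \<Rightarrow> P $ a $ c
          | Inr (Inr (Inr (Inl c))) \<Rightarrow> - (P ** L ** Sh) $ a $ c
          | _ \<Rightarrow> 0)
      | Inr (Inr (Inl a)) \<Rightarrow> (case j of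
            Inr (Inl c) \<Rightarrow> P $ a $ c
          | Inr (Inr (Inl c)) \<Rightarrow> ((1 - b) / w) * (mat 1 :: real^'n^'n) $ a $ c
          | _ \<Rightarrow> 0)
      | Inr (Inr (Inr (Inl a))) \<Rightarrow> (case j of
            Inr (Inl c) \<Rightarrow> - (Sh ** transpose L ** P) $ a $ c
          | Inr (Inr (Inr (Inl c))) \<Rightarrow> ((1 - b) / w) * (mat 1 :: real^'m^'m) $ a $ c
          | _ \<Rightarrow> 0)
      | Inr (Inr (Inr (Inr (Inl a)))) \<Rightarrow> (case j of
            Inr (Inr (Inr (Inr (Inl c)))) \<Rightarrow> (mat 1 :: real^'p^'p) $ a $ c
          | _ \<Rightarrow> 0)
      | Inr (Inr (Inr (Inr (Inr a)))) \<Rightarrow> (case j of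
            Inr (Inr (Inr (Inr (Inr c)))) \<Rightarrow> (mat 1 :: real^'q^'q) $ a $ c
          | _ \<Rightarrow> 0)))"

end

theory Submission
  imports Defs
begin

text \<open>
  Evaluate the quadratic form of the LMI matrix at the stacked vector
  \<open>(e\<^sub>k, -e\<^sub>k\<^sub>+\<^sub>1, v\<^sub>k, \<zeta>\<^sub>k, 0, 0)\<close>. Since
  \<open>e\<^sub>k\<^sub>+\<^sub>1 = F e\<^sub>k - L \<Sigma>\<^sup>1\<^sup>/\<^sup>2 \<zeta>\<^sub>k + v\<^sub>k\<close>, the cross terms
  collapse and positive semidefiniteness yields the dissipation inequality
  \<open>V(e\<^sub>k\<^sub>+\<^sub>1) \<le> b V(e\<^sub>k) + (1 - b)/\<omega> (\<parallel>v\<^sub>k\<parallel>\<^sup>2 + \<parallel>\<zeta>\<^sub>k\<parallel>\<^sup>2)\<close> for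
  \<open>V(e) = e\<^sup>T P e\<close>. The noise bounds make the last term at most \<open>1 - b\<close>,
  so \<open>V \<le> 1\<close> is preserved along every trajectory starting at \<open>e\<^sub>1 = 0\<close>.
\<close>

lemma sum_UNIV_Plus:
  "(\<Sum>i\<in>UNIV. f i) = (\<Sum>a\<in>UNIV. f (Inl a)) + (\<Sum>c\<in>UNIV. f (Inr c))"
  for f :: "'a::finite + 'b::finite \<Rightarrow> 'c::comm_monoid_add"
  using sum.Plus[of "UNIV::'a set" "UNIV::'b set" f] by (simp add: comp_def)

definition stack6 ::
  "real^'a::finite \<Rightarrow> real^'b::finite \<Rightarrow> real^'c::finite \<Rightarrow> real^'d::finite
   \<Rightarrow> real^'e::finite \<Rightarrow> real^'f::finite \<Rightarrow> real^('a + 'b + 'c + 'd + 'e + 'f)" where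
  "stack6 x1 x2 x3 x4 x5 x6 = (\<chi> i. case i of
       Inl a \<Rightarrow> x1 $ a
     | Inr (Inl a) \<Rightarrow> x2 $ a
     | Inr (Inr (Inl a)) \<Rightarrow> x3 $ a
     | Inr (Inr (Inr (Inl a))) \<Rightarrow> x4 $ a
     | Inr (Inr (Inr (Inr (Inl a)))) \<Rightarrow> x5 $ a
     | Inr (Inr (Inr (Inr (Inr a)))) \<Rightarrow> x6 $ a)"

lemma inner_stack6:
  "stack6 x1 x2 x3 x4 x5 x6 \<bullet> stack6 y1 y2 y3 y4 y5 y6
     = x1 \<bullet> y1 + x2 \<bullet> y2 + x3 \<bullet> y3 + x4 \<bullet> y4 + x5 \<bullet> y5 + x6 \<bullet> y6"
  by (simp add: stack6_def inner_vec_def sum_UNIV_Plus)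

lemma lmi_mat_mult_stack6:
  fixes F :: "real^'n::finite^'n" and L :: "real^'m::finite^'n" and Sh :: "real^'m^'m"
  shows "(lmi_mat F L Sh P b w :: real^('n + 'n + 'n + 'm + 'p::finite + 'q::finite)^_)
           *v stack6 e y v z 0 0
         = stack6 (b *s (P *v e) + (transpose F ** P) *v y)
                  ((P ** F) *v e + P *v y + P *v v - (P ** L ** Sh) *v z)
                  (P *v y + ((1 - b) / w) *s v)
                  (((1 - b) / w) *s z - (Sh ** transpose L ** P) *v y) 0 (0 :: real^'q)"
  (is "?M *v ?x = ?r")
proof -
  have "(?M *v ?x) $ i = ?r $ i" for i
  proof -
    consider a where "i = Inl a" | a where "i = Inr (Inl a)" | a where "i = Inr (Inr (Inl a))"
      | a where "i = Inr (Inr (Inr (Inl a)))" | a where "i = Inr (Inr (Inr (Inr (Inl a))))"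
      | a where "i = Inr (Inr (Inr (Inr (Inr a))))"
      by (metis sum.exhaust)
    then show ?thesis
      by cases (simp_all add: lmi_mat_def stack6_def matrix_vector_mult_def sum_UNIV_Plus mat_def
          sum_distrib_left sum_subtractf sum_negf mult.assoc mult_if_delta if_distrib[of "\<lambda>x. _ * x"]
          if_distrib[of "\<lambda>x. x * _"] if_distrib[of "\<lambda>x. x / _"] sum.delta cong: if_cong)
  qed
  then show ?thesis by (simp add: vec_eq_iff)
qed

lemma matrix_vector_mult_uminus_right:
  "A *v (- x) = - (A *v x)" for A :: "'a::comm_ring_1^'m::finite^'n::finite"
  by (simp add: vec_eq_iff matrix_vector_mult_def sum_negf)

lemma inner_matrix_vector_transpose:
  "u \<bullet> (A *v w) = (transpose A *v u) \<bullet> w" for A :: "real^'m::finite^'n::finite"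
  by (simp add: dot_lmul_matrix[symmetric])

lemma lmi_mat_quadratic_form:
  fixes F :: "real^'n::finite^'n" and L :: "real^'m::finite^'n" and Sh :: "real^'m^'m"
    and e y v :: "real^'n" and z :: "real^'m"
  assumes P_sym: "transpose P = P" and Sh_sym: "transpose Sh = Sh"
    and y: "y = F *v e - (L ** Sh) *v z + v"
  defines "x \<equiv> stack6 e (- y) v z 0 (0 :: real^'q::finite)"
  shows "x \<bullet> ((lmi_mat F L Sh P b w :: real^('n + 'n + 'n + 'm + 'p::finite + 'q)^_) *v x)
       = b * (e \<bullet> (P *v e)) - y \<bullet> (P *v y) + (1 - b) / w * (v \<bullet> v + z \<bullet> z)"
proof -
  define u where "u = P *v y"
  have FP: "e \<bullet> ((transpose F ** P) *v y) = (F *v e) \<bullet> u"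
    by (simp add: u_def matrix_vector_mul_assoc[symmetric] inner_matrix_vector_transpose
        del: transpose_matrix_vector)
  have PF: "y \<bullet> ((P ** F) *v e) = u \<bullet> (F *v e)"
    by (simp add: u_def matrix_vector_mul_assoc[symmetric] inner_matrix_vector_transpose P_sym
        del: transpose_matrix_vector)
  have PLSh: "y \<bullet> ((P ** L ** Sh) *v z) = u \<bullet> ((L ** Sh) *v z)"
    by (simp add: u_def matrix_vector_mul_assoc[symmetric] inner_matrix_vector_transpose P_sym
        del: transpose_matrix_vector)
  have ShLP: "z \<bullet> ((Sh ** transpose L ** P) *v y) = ((L ** Sh) *v z) \<bullet> u"
    by (simp add: u_def matrix_vector_mul_assoc[symmetric] inner_matrix_vector_transpose Sh_sym
        del: transpose_matrix_vector)
  have Pv: "y \<bullet> (P *v v) = u \<bullet> v"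
    by (simp add: u_def inner_matrix_vector_transpose P_sym del: transpose_matrix_vector)
  have uy: "u \<bullet> y = u \<bullet> (F *v e) - u \<bullet> ((L ** Sh) *v z) + u \<bullet> v"
    by (simp add: y inner_add_right inner_diff_right)
  show ?thesis
    unfolding x_def lmi_mat_mult_stack6 inner_stack6
    using FP PF PLSh ShLP Pv uy
    by (simp add: u_def[symmetric] inner_add_right inner_diff_right inner_commute
        matrix_vector_mult_uminus_right scalar_mult_eq_scaleR algebra_simps)
qed

lemma lmi_mat_psd_decrease:
  fixes F :: "real^'n::finite^'n" and L :: "real^'m::finite^'n" and Sh :: "real^'m^'m"
  assumes "psd (lmi_mat F L Sh P b w
                 :: real^('n + 'n + 'n + 'm + 'p::finite + 'q::finite)^('n + 'n + 'n + 'm + 'p + 'q))"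
    and "transpose P = P" and "transpose Sh = Sh"
  fixes e v :: "real^'n" and z :: "real^'m"
  defines "y \<equiv> F *v e - (L ** Sh) *v z + v"
  shows "y \<bullet> (P *v y) \<le> b * (e \<bullet> (P *v e)) + (1 - b) / w * (v \<bullet> v + z \<bullet> z)"
proof -
  have "0 \<le> stack6 e (- y) v z (0 :: real^'p) (0 :: real^'q)
          \<bullet> (lmi_mat F L Sh P b w *v stack6 e (- y) v z (0 :: real^'p) (0 :: real^'q))"
    using assms(1) unfolding psd_def by blast
  then show ?thesis
    using lmi_mat_quadratic_form[OF assms(2,3) y_def[THEN meta_eq_to_obj_eq],
        where 'p = 'p and 'q = 'q, of b w]
    by linarith
qed

lemma contracting_sequence_le_1:
  fixes V :: "nat \<Rightarrow> real"
  assumes "V k0 \<le> 1" and "0 \<le> b"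
    and "\<And>k. k \<ge> k0 \<Longrightarrow> V (Suc k) \<le> b * V k + (1 - b)"
  shows "k \<ge> k0 \<Longrightarrow> V k \<le> 1"
proof (induction k rule: dec_induct)
  case base then show ?case using assms(1) .
next
  case (step k)
  have "V (Suc k) \<le> b * V k + (1 - b)" using step.hyps assms(3) by blast
  also have "\<dots> \<le> b * 1 + (1 - b)" using step.IH assms(2) by (simp add: mult_left_le)
  finally show ?case by simp
qed

theorem theorem1:
  fixes F :: "real^'n^'n" and L :: "real^'m^'n" and Sigma Sh :: "real^'m^'m"
    and P :: "real^'n^'n" and b alpha vbar :: real
    and e v :: "nat \<Rightarrow> real^'n" and zeta :: "nat \<Rightarrow> real^'m"
  assumes "posdef Sigma"
    and "transpose Sh = Sh" and "Sh ** Sh = Sigma"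
    and "alpha > 0" and "vbar > 0"
    and "posdef P" and "0 < b" and "b < 1"
    and "psd (lmi_mat F L Sh P b (alpha + vbar)
               :: real^('n + 'n + 'n + 'm + 'p::finite + 'q::finite)^('n + 'n + 'n + 'm + 'p + 'q))"
    and "e 1 = 0"
    and "\<forall>k\<ge>1. e (Suc k) = F *v e k - (L ** Sh) *v zeta k + v k"
    and "\<forall>k\<ge>1. (norm (zeta k))\<^sup>2 \<le> alpha"
    and "\<forall>k\<ge>1. (norm (v k))\<^sup>2 \<le> vbar"
  shows "\<forall>k\<ge>1. e k \<bullet> (P *v e k) \<le> 1"
proof -
  have P_sym: "transpose P = P" using \<open>posdef P\<close> unfolding posdef_def by blast
  have "e (Suc k) \<bullet> (P *v e (Suc k)) \<le> b * (e k \<bullet> (P *v e k)) + (1 - b)" if "k \<ge> 1" for k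
  proof -
    have noise: "v k \<bullet> v k + zeta k \<bullet> zeta k \<le> alpha + vbar"
      using assms(12,13) \<open>k \<ge> 1\<close>
      by (simp add: power2_norm_eq_inner add.commute[of alpha] add_mono)
    have "(1 - b) / (alpha + vbar) * (v k \<bullet> v k + zeta k \<bullet> zeta k) \<le> 1 - b"
      using mult_left_mono[OF noise, of "(1 - b) / (alpha + vbar)"] assms(4,5,8) by simp
    then show ?thesis
      using lmi_mat_psd_decrease[OF assms(9) P_sym assms(2), of "e k" "zeta k" "v k"]
        assms(11) \<open>k \<ge> 1\<close> by simp
  qed
  then show ?thesis
    using contracting_sequence_le_1[of "\<lambda>k. e k \<bullet> (P *v e k)" 1 b] assms(7,10) by simp
qed

end
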